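(* Let $(\Omega,\nu)$ be a measure space and $u,v\colon\Omega\to(0,1]$ measurable functions such that, for some $\alpha>0$, $$\int_\Omega|\log u|\,d\nu<\infty\qquad\text{and}\qquad\int_\Omega u\,v^{-\alpha}\,d\nu<\infty .$$ Then $\displaystyle\int_\Omega|\log v|\,d\nu<\infty$. *)

theory Defs
  imports "HOL-Analysis.Analysis"
begin

end

theory Submission
  imports Defs
begin

text \<open>The inequality \<open>ln w \<le> w\<close> for \<open>w = u v\<^sup>-\<^sup>\<alpha>\<close> reads \<open>ln u - \<alpha> ln v \<le> u v\<^sup>-\<^sup>\<alpha>\<close>,
  i.e. \<open>\<alpha> \<bar>ln v\<bar> \<le> \<bar>ln u\<bar> + u v\<^sup>-\<^sup>\<alpha>\<close> when \<open>v \<le> 1\<close>.\<close>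

lemma abs_ln_le_ln_weighted_powr:
  fixes u v \<alpha> :: real
  assumes "0 < u" "0 < v" "v \<le> 1" "\<alpha> > 0"
  shows "\<bar>ln v\<bar> \<le> (\<bar>ln u\<bar> + u * v powr (- \<alpha>)) / \<alpha>"
proof -
  have "ln (u * v powr (- \<alpha>)) = ln u - \<alpha> * ln v"
    using assms by (simp add: ln_mult)
  moreover have "ln (u * v powr (- \<alpha>)) \<le> u * v powr (- \<alpha>)"
    using assms by (intro ln_bound) simp
  moreover have "\<alpha> * \<bar>ln v\<bar> = - (\<alpha> * ln v)" "- ln u \<le> \<bar>ln u\<bar>"
    using assms by auto
  ultimately have "\<alpha> * \<bar>ln v\<bar> \<le> \<bar>ln u\<bar> + u * v powr (- \<alpha>)"
    by linarith
  then show ?thesis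
    using assms by (simp add: field_simps)
qed

theorem lemma4p2:
  fixes M :: "'a measure" and u v :: "'a \<Rightarrow> real" and \<alpha> :: real
  assumes u_meas: "u \<in> borel_measurable M"
    and v_meas: "v \<in> borel_measurable M"
    and u_range: "\<And>x. x \<in> space M \<Longrightarrow> 0 < u x \<and> u x \<le> 1"
    and v_range: "\<And>x. x \<in> space M \<Longrightarrow> 0 < v x \<and> v x \<le> 1"
    and alpha_pos: "\<alpha> > 0"
    and log_u_fin: "(\<integral>\<^sup>+ x. ennreal \<bar>ln (u x)\<bar> \<partial>M) < \<infinity>"
    and uv_fin: "(\<integral>\<^sup>+ x. ennreal (u x * v x powr (- \<alpha>)) \<partial>M) < \<infinity>"
  shows "(\<integral>\<^sup>+ x. ennreal \<bar>ln (v x)\<bar> \<partial>M) < \<infinity>"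
proof -
  have pointwise: "ennreal \<bar>ln (v x)\<bar>
      \<le> ennreal (1 / \<alpha>) * (ennreal \<bar>ln (u x)\<bar> + ennreal (u x * v x powr (- \<alpha>)))"
    if x: "x \<in> space M" for x
  proof -
    have "0 \<le> u x * v x powr (- \<alpha>)"
      using u_range[OF x] by simp
    then have "ennreal (1 / \<alpha>) * (ennreal \<bar>ln (u x)\<bar> + ennreal (u x * v x powr (- \<alpha>)))
        = ennreal ((\<bar>ln (u x)\<bar> + u x * v x powr (- \<alpha>)) / \<alpha>)"
      using alpha_pos
      by (simp add: ennreal_plus[symmetric] ennreal_mult[symmetric] divide_inverse mult.commute
          del: ennreal_plus)
    then show ?thesis
      using abs_ln_le_ln_weighted_powr[of "u x" "v x" \<alpha>] u_range[OF x] v_range[OF x] alpha_pos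
      by (simp add: ennreal_leI)
  qed
  have "(\<integral>\<^sup>+ x. ennreal \<bar>ln (v x)\<bar> \<partial>M)
      \<le> (\<integral>\<^sup>+ x. ennreal (1 / \<alpha>) * (ennreal \<bar>ln (u x)\<bar> + ennreal (u x * v x powr (- \<alpha>))) \<partial>M)"
    using pointwise by (intro nn_integral_mono) auto
  also have "\<dots> = ennreal (1 / \<alpha>) * ((\<integral>\<^sup>+ x. ennreal \<bar>ln (u x)\<bar> \<partial>M)
      + (\<integral>\<^sup>+ x. ennreal (u x * v x powr (- \<alpha>)) \<partial>M))"
    using u_meas v_meas by (simp add: nn_integral_cmult nn_integral_add)
  also have "\<dots> < \<infinity>"
    using log_u_fin uv_fin by (simp add: ennreal_mult_less_top)
  finally show ?thesis .
qed

end
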